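(* Let $\eta>0$, $T>0$, $\beta\in[0,+\infty]$, $\theta>0$, $v>0$. Let $u$ be any real number if $\beta=+\infty$ and $u=-v\beta$ otherwise. Write $\omega=W(\theta v\eta^2T)$ and define $k_\beta:\mathbb R\to\mathbb R$ by $$k_\beta(z)=\theta\left(u+ve^{\eta\sqrt Tz}\right)1_{z\le\frac{\ln\beta}{\eta\sqrt T}}+\frac{z^2}{2}$$ (conventions $\ln(+\infty)=+\infty$, $\ln0=-\infty$), and $$m(\beta)=\begin{cases}-\frac{\omega}{\eta\sqrt T}&\text{if }\beta\in\left[\frac1{\theta v}\left(\frac{\omega}{\eta^2T}+\frac{\omega^2}{2\eta^2T}\right),+\infty\right],\\0&\text{otherwise.}\end{cases}$$ Then $k_\beta$ attains its minimum value at $m(\beta)$. Moreover, if $\beta<+\infty$, $$k_\beta(m(\beta))=-\left(\theta v\beta-\frac{\omega}{\eta^2T}-\frac{\omega^2}{2\eta^2T}\right)_+,$$ and $$k_{+\infty}(m(+\infty))=\frac{\omega}{\eta^2T}+\frac{\omega^2}{2\eta^2T}+\theta u.$$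
   Context: The Lambert function $W$ is the inverse of the bijection $x\in(-1,+\infty)\mapsto xe^x\in(-1/e,+\infty)$; $x_+=\max(x,0)$. *)

theory Defs
  imports "HOL-Analysis.Analysis" "HOL-Library.Extended_Real"
begin

definition lambert_W :: "real \<Rightarrow> real" where
  "lambert_W y = (THE w. -1 < w \<and> w * exp w = y)"

text \<open>Indicator condition z \<le> ln \<beta> / (\<eta> sqrt T), with ln(+\<infinity>) = +\<infinity>, ln 0 = -\<infinity>.\<close>
definition below_log :: "real \<Rightarrow> real \<Rightarrow> ereal \<Rightarrow> real \<Rightarrow> bool" where
  "below_log \<eta> T \<beta> z =
     (\<beta> = \<infinity> \<or> (0 < \<beta> \<and> \<beta> \<noteq> \<infinity> \<and> z \<le> ln (real_of_ereal \<beta>) / (\<eta> * sqrt T)))"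

definition k_fun :: "real \<Rightarrow> real \<Rightarrow> real \<Rightarrow> real \<Rightarrow> real \<Rightarrow> ereal \<Rightarrow> real \<Rightarrow> real" where
  "k_fun \<eta> T \<theta> u v \<beta> z =
     \<theta> * (u + v * exp (\<eta> * sqrt T * z)) * (if below_log \<eta> T \<beta> z then 1 else 0) + z\<^sup>2 / 2"

definition m_fun :: "real \<Rightarrow> real \<Rightarrow> real \<Rightarrow> real \<Rightarrow> ereal \<Rightarrow> real" where
  "m_fun \<eta> T \<theta> v \<beta> =
     (let \<omega> = lambert_W (\<theta> * v * \<eta>\<^sup>2 * T) in
      if ereal ((1 / (\<theta> * v)) * (\<omega> / (\<eta>\<^sup>2 * T) + \<omega>\<^sup>2 / (2 * \<eta>\<^sup>2 * T))) \<le> \<beta>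
      then - \<omega> / (\<eta> * sqrt T) else 0)"

end

theory Submission
  imports Defs
begin

(*
  Put a = \<eta> sqrt T, c = \<theta> v and \<omega> = W(c a\<^sup>2). The convex function
  G z = c e^(a z) + z\<^sup>2/2 has G'(-\<omega>/a) = a c e^(-\<omega>) - \<omega>/a = 0, so its minimum is
  G(-\<omega>/a) = \<omega>/a\<^sup>2 + \<omega>\<^sup>2/(2 a\<^sup>2); the lower bound is the tangent inequality
  e^t \<ge> 1 + t at t = a z + \<omega>. This settles \<beta> = \<infinity>. For finite \<beta>, k equals G - c \<beta>
  on z \<le> ln \<beta> / a and z\<^sup>2/2 beyond, so min (G(-\<omega>/a) - c \<beta>) 0 is a lower bound. It is
  attained at -\<omega>/a if G(-\<omega>/a) \<le> c \<beta>, because then c e^(-\<omega>) \<le> c \<beta>, and at 0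
  otherwise, because G(-\<omega>/a) < c forces \<beta> < 1.
*)

lemma strict_mono_on_mult_exp: "strict_mono_on {-1..} (\<lambda>w::real. w * exp w)"
proof (rule strict_mono_onI)
  fix x y :: real
  assume x: "x \<in> {-1..}" and "x < y"
  have deriv: "((\<lambda>w. w * exp w) has_real_derivative (1 + t) * exp t) (at t)" for t
    by (auto intro!: derivative_eq_intros simp: algebra_simps)
  have pos: "0 < (1 + t) * exp t" if "x < t" for t
    using x that by simp
  show "x * exp x < y * exp y"
  proof (rule DERIV_pos_imp_increasing_open[OF \<open>x < y\<close>])
    show "continuous_on {x..y} (\<lambda>w. w * exp w)"
      by (intro continuous_intros)
  qed (use deriv pos in blast)
qed

lemma lambert_W_eqI:
  assumes "-1 < w" "w * exp w = y"
  shows "lambert_W y = w"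
  unfolding lambert_W_def
proof (rule the_equality)
  fix w'
  assume w': "-1 < w' \<and> w' * exp w' = y"
  show "w' = w"
  proof (rule strict_mono_on_eqD[OF strict_mono_on_mult_exp])
    show "w * exp w = w' * exp w'"
      using assms w' by simp
  qed (use assms w' in auto)
qed (use assms in simp)

lemma lambert_W:
  assumes "- exp (-1) < y"
  shows "-1 < lambert_W y" "lambert_W y * exp (lambert_W y) = y"
proof -
  define b where "b = max y 0"
  have "(-1) * exp (-1) \<le> y"
    using assms by simp
  moreover have "y \<le> b * exp b"
    using mult_left_mono[of 1 "exp y" y] unfolding b_def by (cases "y \<ge> 0") auto
  moreover have "-1 \<le> b"
    by (simp add: b_def)
  moreover have "continuous_on {-1..b} (\<lambda>w. w * exp w)"
    by (intro continuous_intros)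
  ultimately have "\<exists>w. -1 \<le> w \<and> w \<le> b \<and> w * exp w = y"
    by (rule IVT'[of "\<lambda>w. w * exp w"])
  then obtain w where w: "-1 \<le> w" "w * exp w = y"
    by blast
  with assms have "-1 < w" by (cases "w = -1") auto
  with w show "-1 < lambert_W y" "lambert_W y * exp (lambert_W y) = y"
    using lambert_W_eqI[of w y] by simp_all
qed

lemma lambert_W_pos:
  assumes "0 < y"
  shows "0 < lambert_W y" "lambert_W y * exp (lambert_W y) = y"
proof -
  have "- exp (-1) < y"
    using assms exp_gt_zero[of "-1"] by linarith
  then have W: "lambert_W y * exp (lambert_W y) = y"
    by (rule lambert_W(2))
  show "0 < lambert_W y"
  proof (rule ccontr)
    assume "\<not> 0 < lambert_W y"
    then have "lambert_W y * exp (lambert_W y) \<le> 0"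
      by (simp add: mult_nonpos_nonneg)
    with W assms show False
      by simp
  qed
  show "lambert_W y * exp (lambert_W y) = y"
    by (fact W)
qed

definition exp_parabola :: "real \<Rightarrow> real \<Rightarrow> real \<Rightarrow> real" where
  "exp_parabola c a z = c * exp (a * z) + z\<^sup>2 / 2"

definition exp_parabola_min :: "real \<Rightarrow> real \<Rightarrow> real" where
  "exp_parabola_min a \<omega> = \<omega> / a\<^sup>2 + \<omega>\<^sup>2 / (2 * a\<^sup>2)"

context
  fixes a c \<omega> :: real
  assumes a: "a \<noteq> 0" and \<omega>: "\<omega> * exp \<omega> = c * a\<^sup>2"
begin

lemma exp_parabola_coeff_exp: "c * exp (- \<omega>) = \<omega> / a\<^sup>2"
  using \<omega> a by (simp add: exp_minus field_simps)

lemma exp_parabola_at_min: "exp_parabola c a (- \<omega> / a) = exp_parabola_min a \<omega>"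
  using a exp_parabola_coeff_exp
  by (simp add: exp_parabola_def exp_parabola_min_def power_divide)

lemma exp_parabola_ge_min:
  assumes "0 \<le> c"
  shows "exp_parabola_min a \<omega> \<le> exp_parabola c a z"
proof -
  have "c * exp (- \<omega>) * (1 + (a * z + \<omega>)) \<le> c * exp (- \<omega>) * exp (a * z + \<omega>)"
    using assms by (intro mult_left_mono exp_ge_add_one_self) auto
  also have "\<dots> = c * exp (a * z)"
    by (simp add: mult.assoc flip: exp_add)
  finally have tangent: "\<omega> / a\<^sup>2 * (1 + (a * z + \<omega>)) \<le> c * exp (a * z)"
    by (simp add: exp_parabola_coeff_exp)
  have "exp_parabola_min a \<omega> = \<omega> / a\<^sup>2 * (1 + (a * z + \<omega>)) + z\<^sup>2 / 2 - (z + \<omega> / a)\<^sup>2 / 2"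
    using a by (simp add: exp_parabola_min_def field_simps power2_eq_square)
  also have "\<dots> \<le> exp_parabola c a z"
    using tangent zero_le_power2[of "z + \<omega> / a"] unfolding exp_parabola_def by linarith
  finally show ?thesis .
qed

lemma exp_parabola_min_less:
  assumes "0 < \<omega>"
  shows "exp_parabola_min a \<omega> < c"
proof -
  have "1 + \<omega> / 2 < exp \<omega>"
    using assms exp_ge_add_one_self[of \<omega>] by linarith
  then have "\<omega> / a\<^sup>2 * (1 + \<omega> / 2) < \<omega> / a\<^sup>2 * exp \<omega>"
    using assms a by (intro mult_strict_left_mono) auto
  then show ?thesis
    using \<omega> a by (simp add: exp_parabola_min_def field_simps power2_eq_square)
qed

lemma exp_parabola_min_le_imp_ln:
  assumes "0 < c" "exp_parabola_min a \<omega> \<le> c * b"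
  shows "0 < b" "- \<omega> \<le> ln b"
proof -
  have "c * exp (- \<omega>) \<le> c * b"
    using assms(2) exp_parabola_coeff_exp zero_le_power2[of \<omega>]
    unfolding exp_parabola_min_def by (smt (verit) divide_nonneg_pos zero_less_power2 a)
  then have "exp (- \<omega>) \<le> b"
    using assms(1) by simp
  moreover show "0 < b"
    using \<open>exp (- \<omega>) \<le> b\<close> exp_gt_zero[of "- \<omega>"] by linarith
  ultimately show "- \<omega> \<le> ln b"
    by (simp add: ln_ge_iff)
qed

end

lemma truncated_exp_parabola_minimum:
  fixes a c \<omega> b :: real
  assumes a: "0 < a" and \<omega>: "0 < \<omega>" "\<omega> * exp \<omega> = c * a\<^sup>2" and b: "0 \<le> b"
  defines "f \<equiv> \<lambda>z. if 0 < b \<and> z \<le> ln b / a then exp_parabola c a z - c * b else z\<^sup>2 / 2"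
    and "m \<equiv> if exp_parabola_min a \<omega> \<le> c * b then - \<omega> / a else 0"
  shows "f m = min (exp_parabola_min a \<omega> - c * b) 0" "f m \<le> f z"
proof -
  have a0: "a \<noteq> 0"
    using a by simp
  have "0 < c * a\<^sup>2"
    using \<omega> by (metis exp_gt_zero mult_pos_pos)
  then have c: "0 < c"
    by (simp add: zero_less_mult_iff)
  have lower: "min (exp_parabola_min a \<omega> - c * b) 0 \<le> f z" for z
  proof (cases "0 < b \<and> z \<le> ln b / a")
    case True
    then show ?thesis
      using exp_parabola_ge_min[OF a0 \<omega>(2) less_imp_le[OF c], of z]
      by (simp add: f_def min_le_iff_disj)
  next
    case False
    then have "f z = z\<^sup>2 / 2"
      unfolding f_def by (rule if_not_P)
    then have "0 \<le> f z"
      using zero_le_power2[of z] by linarith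
    then show ?thesis
      by (rule min.coboundedI2)
  qed
  show attained: "f m = min (exp_parabola_min a \<omega> - c * b) 0"
  proof (cases "exp_parabola_min a \<omega> \<le> c * b")
    case True
    then have "0 < b" "- \<omega> \<le> ln b"
      using exp_parabola_min_le_imp_ln[OF a0 \<omega>(2) c] by auto
    then have "0 < b \<and> - \<omega> / a \<le> ln b / a"
      using divide_right_mono[OF _ less_imp_le[OF a]] by blast
    then have "f m = exp_parabola c a (- \<omega> / a) - c * b"
      using True by (simp add: f_def m_def)
    with True exp_parabola_at_min[OF a0 \<omega>(2)] show ?thesis
      by simp
  next
    case False
    then have "c * b < c"
      using exp_parabola_min_less[OF a0 \<omega>(2) \<omega>(1)] by linarith
    with c have "b < 1"
      by simp
    then have "\<not> (0 < b \<and> 0 \<le> ln b / a)"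
      using a by (simp add: zero_le_divide_iff)
    then have "f 0 = 0"
      unfolding f_def by (simp only: if_not_P) simp
    with False have "f m = 0"
      by (simp add: m_def)
    with False show ?thesis
      by simp
  qed
  show "f m \<le> f z"
    unfolding attained by (rule lower)
qed

lemma exp_parabola_min_eta_sqrt:
  "0 \<le> T \<Longrightarrow> exp_parabola_min (\<eta> * sqrt T) \<omega> = \<omega> / (\<eta>\<^sup>2 * T) + \<omega>\<^sup>2 / (2 * \<eta>\<^sup>2 * T)"
  by (simp add: exp_parabola_min_def power_mult_distrib mult.assoc)

lemma k_fun_eq_exp_parabola:
  "k_fun \<eta> T \<theta> u v \<beta> z =
     (if below_log \<eta> T \<beta> z then \<theta> * u + exp_parabola (\<theta> * v) (\<eta> * sqrt T) z else z\<^sup>2 / 2)"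
  by (simp add: k_fun_def exp_parabola_def algebra_simps)

lemma below_log_infinity: "below_log \<eta> T \<infinity> z"
  by (simp add: below_log_def)

lemma below_log_ereal: "below_log \<eta> T (ereal b) z \<longleftrightarrow> 0 < b \<and> z \<le> ln b / (\<eta> * sqrt T)"
  by (simp add: below_log_def)

lemma m_fun_eq_exp_parabola_min:
  fixes \<eta> T \<theta> v :: real
  assumes "0 \<le> T"
  defines "\<omega> \<equiv> lambert_W (\<theta> * v * \<eta>\<^sup>2 * T)"
  shows "m_fun \<eta> T \<theta> v \<beta> =
    (if ereal (exp_parabola_min (\<eta> * sqrt T) \<omega> / (\<theta> * v)) \<le> \<beta> then - \<omega> / (\<eta> * sqrt T) else 0)"
  using assms by (simp add: m_fun_def exp_parabola_min_eta_sqrt Let_def)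

lemma lambert_W_eta_sqrt:
  fixes \<eta> T \<theta> v :: real
  assumes "0 < \<eta>" "0 < T" "0 < \<theta>" "0 < v"
  defines "\<omega> \<equiv> lambert_W (\<theta> * v * \<eta>\<^sup>2 * T)"
  shows "0 < \<omega>" "\<omega> * exp \<omega> = \<theta> * v * (\<eta> * sqrt T)\<^sup>2"
proof -
  have y: "\<theta> * v * \<eta>\<^sup>2 * T = \<theta> * v * (\<eta> * sqrt T)\<^sup>2"
    using assms by (simp add: power_mult_distrib)
  have "0 < \<theta> * v * (\<eta> * sqrt T)\<^sup>2"
    using assms by simp
  then show "0 < \<omega>" "\<omega> * exp \<omega> = \<theta> * v * (\<eta> * sqrt T)\<^sup>2"
    unfolding \<omega>_def y by (rule lambert_W_pos)+
qed

lemma k_fun_minimum_infinity: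
  fixes \<eta> T \<theta> u v z :: real
  assumes "0 < \<eta>" "0 < T" "0 < \<theta>" "0 < v"
  defines "\<omega> \<equiv> lambert_W (\<theta> * v * \<eta>\<^sup>2 * T)"
  shows "k_fun \<eta> T \<theta> u v \<infinity> (m_fun \<eta> T \<theta> v \<infinity>) = \<theta> * u + exp_parabola_min (\<eta> * sqrt T) \<omega>"
    and "k_fun \<eta> T \<theta> u v \<infinity> (m_fun \<eta> T \<theta> v \<infinity>) \<le> k_fun \<eta> T \<theta> u v \<infinity> z"
proof -
  define a c where "a = \<eta> * sqrt T" and "c = \<theta> * v"
  have a: "a \<noteq> 0" and c: "0 \<le> c"
    using assms by (simp_all add: a_def c_def)
  have \<omega>: "\<omega> * exp \<omega> = c * a\<^sup>2"
    using lambert_W_eta_sqrt[OF assms(1-4)] by (simp add: \<omega>_def a_def c_def)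
  have k: "k_fun \<eta> T \<theta> u v \<infinity> = (\<lambda>z. \<theta> * u + exp_parabola c a z)"
    by (simp add: fun_eq_iff k_fun_eq_exp_parabola below_log_infinity a_def c_def)
  have m: "m_fun \<eta> T \<theta> v \<infinity> = - \<omega> / a"
    using assms by (simp add: m_fun_eq_exp_parabola_min \<omega>_def a_def)
  show "k_fun \<eta> T \<theta> u v \<infinity> (m_fun \<eta> T \<theta> v \<infinity>) = \<theta> * u + exp_parabola_min (\<eta> * sqrt T) \<omega>"
    unfolding k m using exp_parabola_at_min[OF a \<omega>] by (simp add: a_def)
  show "k_fun \<eta> T \<theta> u v \<infinity> (m_fun \<eta> T \<theta> v \<infinity>) \<le> k_fun \<eta> T \<theta> u v \<infinity> z"
    unfolding k m using exp_parabola_at_min[OF a \<omega>] exp_parabola_ge_min[OF a \<omega> c] by simp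
qed

lemma k_fun_minimum_ereal:
  fixes \<eta> T \<theta> v b z :: real
  assumes "0 < \<eta>" "0 < T" "0 < \<theta>" "0 < v" "0 \<le> b"
  defines "\<omega> \<equiv> lambert_W (\<theta> * v * \<eta>\<^sup>2 * T)"
    and "k \<equiv> k_fun \<eta> T \<theta> (- v * b) v (ereal b)"
  shows "k (m_fun \<eta> T \<theta> v (ereal b)) = min (exp_parabola_min (\<eta> * sqrt T) \<omega> - \<theta> * v * b) 0"
    and "k (m_fun \<eta> T \<theta> v (ereal b)) \<le> k z"
proof -
  define a c where "a = \<eta> * sqrt T" and "c = \<theta> * v"
  have a: "0 < a" and c: "0 < c"
    using assms by (simp_all add: a_def c_def)
  have \<omega>: "0 < \<omega>" "\<omega> * exp \<omega> = c * a\<^sup>2"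
    using lambert_W_eta_sqrt[OF assms(1-4)] by (simp_all add: \<omega>_def a_def c_def)
  define f where "f = (\<lambda>z. if 0 < b \<and> z \<le> ln b / a then exp_parabola c a z - c * b else z\<^sup>2 / 2)"
  define m where "m = (if exp_parabola_min a \<omega> \<le> c * b then - \<omega> / a else 0)"
  have "k = f"
    by (simp add: fun_eq_iff k_def f_def k_fun_eq_exp_parabola below_log_ereal a_def c_def)
  moreover have "m_fun \<eta> T \<theta> v (ereal b) = m"
    using assms c by (simp add: m_def m_fun_eq_exp_parabola_min pos_divide_le_eq a_def c_def mult.commute)
  moreover have "f m = min (exp_parabola_min a \<omega> - c * b) 0" "f m \<le> f z"
    unfolding f_def m_def by (fact truncated_exp_parabola_minimum[OF a \<omega> assms(5)])+
  ultimately show "k (m_fun \<eta> T \<theta> v (ereal b)) = min (exp_parabola_min (\<eta> * sqrt T) \<omega> - \<theta> * v * b) 0"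
    and "k (m_fun \<eta> T \<theta> v (ereal b)) \<le> k z"
    by (simp_all add: a_def c_def)
qed

theorem lemma4:
  fixes \<eta> T \<theta> v u :: real and \<beta> :: ereal
  assumes "\<eta> > 0" "T > 0" "\<theta> > 0" "v > 0" "\<beta> \<ge> 0"
    and "\<beta> \<noteq> \<infinity> \<Longrightarrow> u = - v * real_of_ereal \<beta>"
  defines "\<omega> \<equiv> lambert_W (\<theta> * v * \<eta>\<^sup>2 * T)"
  shows "(\<forall>z. k_fun \<eta> T \<theta> u v \<beta> (m_fun \<eta> T \<theta> v \<beta>) \<le> k_fun \<eta> T \<theta> u v \<beta> z)
    \<and> (\<beta> \<noteq> \<infinity> \<longrightarrow> k_fun \<eta> T \<theta> u v \<beta> (m_fun \<eta> T \<theta> v \<beta>) =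
          - max (\<theta> * v * real_of_ereal \<beta> - \<omega> / (\<eta>\<^sup>2 * T) - \<omega>\<^sup>2 / (2 * \<eta>\<^sup>2 * T)) 0)
    \<and> (\<beta> = \<infinity> \<longrightarrow> k_fun \<eta> T \<theta> u v \<beta> (m_fun \<eta> T \<theta> v \<beta>) =
          \<omega> / (\<eta>\<^sup>2 * T) + \<omega>\<^sup>2 / (2 * \<eta>\<^sup>2 * T) + \<theta> * u)"
proof (cases \<beta>)
  case PInf
  then show ?thesis
    using k_fun_minimum_infinity[OF assms(1-4)] exp_parabola_min_eta_sqrt assms(2)
    by (simp add: \<omega>_def add.commute)
next
  case (real b)
  with assms have "0 \<le> b" and u: "u = - v * b"
    by simp_all
  have "min (exp_parabola_min (\<eta> * sqrt T) \<omega> - \<theta> * v * b) 0 =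
      - max (\<theta> * v * b - \<omega> / (\<eta>\<^sup>2 * T) - \<omega>\<^sup>2 / (2 * \<eta>\<^sup>2 * T)) 0"
    using exp_parabola_min_eta_sqrt assms(2) by simp
  with real u show ?thesis
    using k_fun_minimum_ereal[OF assms(1-4) \<open>0 \<le> b\<close>] by (simp add: \<omega>_def)
qed (use assms in simp)

end
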